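(* If $X$ is a path connected, indecomposable topological quandle, then $H_0(X)\cong\mathbb{Z}$.
   Context: A quandle is a set with a binary operation $\triangleright$ such that $x\triangleright x=x$, each $\beta_y(x)=x\triangleright y$ is bijective, and $(x\triangleright y)\triangleright z=(x\triangleright z)\triangleright(y\triangleright z)$; write $x\triangleright^{-1}y=\beta_y^{-1}(x)$. A topological quandle is a topological space with a continuous quandle operation such that every $\beta_y$ is a homeomorphism. A quandle $X$ is indecomposable if for every $x,y\in X$ there exist $y_1,\dots,y_n\in X$ and $e_1,\dots,e_n\in\{-1,1\}$ with $x=(\cdots((y\triangleright^{e_1}y_1)\triangleright^{e_2}y_2)\cdots)\triangleright^{e_n}y_n$. $C_0(X)$ is the free abelian group on points of $X$ (constant 0-simplices $\sigma_x$), $C_1(X)$ the free abelian group on paths $\sigma:[0,1]\to X$; for a path $\sigma_{[a,b]}$ from $a$ to $b$, $\partial_1\sigma_{[a,b]}=\sigma_a-\sigma_{a\triangleright b}$. $H_0(X)=C_0(X)/\partial_1(C_1(X))$. (This is degree $0$ of the chain complex where $C_n(X)$ is free on singular $n$-simplices $\sigma_{[x_1,\dots,x_{n+1}]}$, $x_i=\sigma(e_{i-1})$, with $\partial_n\sigma=\sum_{i=2}^{n+1}(-1)^i(d_i\sigma-d_i\sigma\triangleright s_i\sigma)$, $d_i\sigma$ the face omitting $x_i$, $s_i\sigma$ the simplex $\sigma\circ\iota_i$ with vertices $x_i,\dots,x_i,x_{i+1},\dots,x_{n+1}$, and $\triangleright$ applied pointwise.) *)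

theory Defs
  imports "HOL-Analysis.Analysis" "HOL-Algebra.Free_Abelian_Groups" "HOL-Algebra.Elementary_Groups"
    "HOL-Algebra.Coset"
begin

definition quandle_on :: "'a set \<Rightarrow> ('a \<Rightarrow> 'a \<Rightarrow> 'a) \<Rightarrow> bool" where
  "quandle_on S qop \<longleftrightarrow>
     (\<forall>x\<in>S. \<forall>y\<in>S. qop x y \<in> S) \<and>
     (\<forall>x\<in>S. qop x x = x) \<and>
     (\<forall>y\<in>S. bij_betw (\<lambda>x. qop x y) S S) \<and>
     (\<forall>x\<in>S. \<forall>y\<in>S. \<forall>z\<in>S. qop (qop x y) z = qop (qop x z) (qop y z))"

definition topological_quandle :: "'a topology \<Rightarrow> ('a \<Rightarrow> 'a \<Rightarrow> 'a) \<Rightarrow> bool" where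
  "topological_quandle X qop \<longleftrightarrow>
     quandle_on (topspace X) qop \<and>
     continuous_map (prod_topology X X) X (\<lambda>(x, y). qop x y) \<and>
     (\<forall>y\<in>topspace X. homeomorphic_map X X (\<lambda>x. qop x y))"

text \<open>x \<triangleright>^e y for e = True (exponent 1) or e = False (exponent -1).\<close>
definition qop_pow :: "'a set \<Rightarrow> ('a \<Rightarrow> 'a \<Rightarrow> 'a) \<Rightarrow> 'a \<Rightarrow> bool \<Rightarrow> 'a \<Rightarrow> 'a" where
  "qop_pow S qop x e y = (if e then qop x y else inv_into S (\<lambda>z. qop z y) x)"

definition indecomposable :: "'a set \<Rightarrow> ('a \<Rightarrow> 'a \<Rightarrow> 'a) \<Rightarrow> bool" where
  "indecomposable S qop \<longleftrightarrow>
     (\<forall>x\<in>S. \<forall>y\<in>S. \<exists>ys es. length es = length ys \<and> set ys \<subseteq> S \<and>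
        x = foldl (\<lambda>a (yi, ei). qop_pow S qop a ei yi) y (zip ys es))"

definition C0 :: "'a topology \<Rightarrow> ('a \<Rightarrow>\<^sub>0 int) monoid" where
  "C0 X = free_Abelian_group (topspace X)"

definition C1 :: "'a topology \<Rightarrow> ((real \<Rightarrow> 'a) \<Rightarrow>\<^sub>0 int) monoid" where
  "C1 X = free_Abelian_group {g. pathin X g}"

definition bd1 :: "('a \<Rightarrow> 'a \<Rightarrow> 'a) \<Rightarrow> ((real \<Rightarrow> 'a) \<Rightarrow>\<^sub>0 int) \<Rightarrow> ('a \<Rightarrow>\<^sub>0 int)" where
  "bd1 qop = frag_extend (\<lambda>g. frag_of (g 0) - frag_of (qop (g 0) (g 1)))"

definition H0 :: "'a topology \<Rightarrow> ('a \<Rightarrow> 'a \<Rightarrow> 'a) \<Rightarrow> ('a \<Rightarrow>\<^sub>0 int) set monoid" where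
  "H0 X qop = C0 X Mod (bd1 qop ` carrier (C1 X))"

end

theory Submission
  imports Defs
begin

text \<open>The augmentation \<open>C\<^sub>0(X) \<rightarrow> \<int>\<close> (sum of coefficients) is onto and kills every boundary
  \<open>\<sigma>\<^sub>a - \<sigma>\<^bsub>a \<triangleright> b\<^esub>\<close>, so \<open>H\<^sub>0(X) \<cong> \<int>\<close> once its kernel consists of boundaries, i.e. once
  \<open>\<sigma>\<^sub>a - \<sigma>\<^sub>b\<close> is a boundary for all points \<open>a, b\<close>. A path from \<open>a\<close> to \<open>b\<close> has boundary
  \<open>\<sigma>\<^sub>a - \<sigma>\<^bsub>a \<triangleright> b\<^esub>\<close>, so the equivalence relation "\<open>\<sigma>\<^sub>a - \<sigma>\<^sub>b\<close> is a boundary" relates \<open>a\<close>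
  to \<open>a \<triangleright> b\<close>, hence also to \<open>a \<triangleright>\<^sup>-\<^sup>1 b\<close>; by indecomposability it relates any two points.\<close>

text \<open>Sum of the coefficients, computed as the chain pushed forward to the one-point space.\<close>

definition augmentation :: "('a \<Rightarrow>\<^sub>0 int) \<Rightarrow> int" where
  "augmentation c = Poly_Mapping.lookup (frag_extend (\<lambda>_. frag_of ()) c) ()"

lemma augmentation_0 [simp]: "augmentation 0 = 0"
  by (simp add: augmentation_def)

lemma augmentation_frag_of [simp]: "augmentation (frag_of x) = 1"
  by (simp add: augmentation_def)

lemma augmentation_diff [simp]: "augmentation (a - b) = augmentation a - augmentation b"
  by (simp add: augmentation_def frag_extend_diff lookup_minus)

lemma augmentation_add [simp]: "augmentation (a + b) = augmentation a + augmentation b"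
  by (simp add: augmentation_def frag_extend_add lookup_add)

lemma augmentation_cmul [simp]: "augmentation (frag_cmul n a) = n * augmentation a"
  by (simp add: augmentation_def frag_extend_cmul)

lemma augmentation_hom: "augmentation \<in> hom (free_Abelian_group S) integer_group"
  by (rule homI) simp_all

lemma subgroup_free_Abelian_group_uminus_closed:
  assumes "subgroup B (free_Abelian_group S)" "a \<in> B"
  shows "- a \<in> B"
  using subgroup.m_inv_closed[OF assms] subgroup.mem_carrier[OF assms] by simp

lemma subgroup_free_Abelian_group_diff_closed:
  assumes "subgroup B (free_Abelian_group S)" "a \<in> B" "b \<in> B"
  shows "a - b \<in> B"
  using subgroup.m_closed[OF assms(1,2) subgroup_free_Abelian_group_uminus_closed[OF assms(1,3)]]
  by simp

lemma kernel_augmentation_eq: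
  assumes B: "subgroup B (free_Abelian_group S)" and aug: "\<And>c. c \<in> B \<Longrightarrow> augmentation c = 0"
    and "x\<^sub>0 \<in> S" and gen: "\<And>x. x \<in> S \<Longrightarrow> frag_of x - frag_of x\<^sub>0 \<in> B"
  shows "kernel (free_Abelian_group S) integer_group augmentation = B"
proof
  show "B \<subseteq> kernel (free_Abelian_group S) integer_group augmentation"
  proof
    fix c assume "c \<in> B"
    then show "c \<in> kernel (free_Abelian_group S) integer_group augmentation"
      using subgroup.mem_carrier[OF B \<open>c \<in> B\<close>] aug by (simp add: kernel_def)
  qed
next
  show "kernel (free_Abelian_group S) integer_group augmentation \<subseteq> B"
  proof
    fix c assume "c \<in> kernel (free_Abelian_group S) integer_group augmentation"
    then have c: "Poly_Mapping.keys c \<subseteq> S" "augmentation c = 0"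
      by (auto simp: kernel_def)
    have "c - frag_cmul (augmentation c) (frag_of x\<^sub>0) \<in> B"
      using c(1)
    proof (induction c rule: frag_induction)
      case zero
      then show ?case
        using subgroup.one_closed[OF B] by simp
    next
      case (one x)
      then show ?case
        using gen by simp
    next
      case (diff a b)
      then show ?case
        using subgroup_free_Abelian_group_diff_closed[OF B diff]
        by (simp add: frag_cmul_diff_distrib algebra_simps)
    qed
    with c show "c \<in> B"
      by simp
  qed
qed

lemma free_Abelian_group_Mod_kernel_augmentation:
  assumes "S \<noteq> {}"
  shows "free_Abelian_group S Mod kernel (free_Abelian_group S) integer_group augmentation
    \<cong> integer_group"
proof (rule group_hom.FactGroup_iso)
  show "group_hom (free_Abelian_group S) integer_group augmentation"
    by (simp add: group_hom_def group_hom_axioms_def augmentation_hom)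
  obtain x\<^sub>0 where "x\<^sub>0 \<in> S"
    using assms by blast
  have "n \<in> augmentation ` carrier (free_Abelian_group S)" for n
  proof
    show "n = augmentation (frag_cmul n (frag_of x\<^sub>0))"
      by simp
    show "frag_cmul n (frag_of x\<^sub>0) \<in> carrier (free_Abelian_group S)"
      using keys_cmul[of n "frag_of x\<^sub>0"] \<open>x\<^sub>0 \<in> S\<close> by auto
  qed
  then show "augmentation ` carrier (free_Abelian_group S) = carrier integer_group"
    by auto
qed

lemma quandle_on_qop_pow_in:
  assumes "quandle_on S qop" "x \<in> S" "y \<in> S"
  shows "qop_pow S qop x e y \<in> S"
  using assms by (auto simp: quandle_on_def qop_pow_def bij_betw_def inv_into_into)

lemma quandle_on_qop_qop_pow_False:
  assumes "quandle_on S qop" "x \<in> S" "y \<in> S"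
  shows "qop (qop_pow S qop x False y) y = x"
proof -
  have "x \<in> (\<lambda>z. qop z y) ` S"
    using assms by (simp add: quandle_on_def bij_betw_def)
  from f_inv_into_f[OF this] show ?thesis
    by (simp add: qop_pow_def)
qed

lemma indecomposable_quandle_related:
  assumes Q: "quandle_on S qop" and "indecomposable S qop"
    and sym: "\<And>x y. R x y \<Longrightarrow> R y x" and trans: "\<And>x y z. R x y \<Longrightarrow> R y z \<Longrightarrow> R x z"
    and step: "\<And>x y. x \<in> S \<Longrightarrow> y \<in> S \<Longrightarrow> R x (qop x y)"
    and "x \<in> S" "y \<in> S"
  shows "R x y"
proof -
  have refl: "R x x" if "x \<in> S" for x
    using step[OF that that] Q that by (simp add: quandle_on_def)
  have pow: "R x (qop_pow S qop x e y)" if "x \<in> S" "y \<in> S" for x y e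
  proof (cases e)
    case True
    then show ?thesis
      using step[OF that] by (simp add: qop_pow_def)
  next
    case False
    then show ?thesis
      using sym step[OF quandle_on_qop_pow_in[OF Q that, of False] that(2)]
      by (simp add: quandle_on_qop_qop_pow_False[OF Q that])
  qed
  define act where "act = (\<lambda>a (yi, ei). qop_pow S qop a ei yi)"
  have act: "act a p \<in> S" "R a (act a p)" if "a \<in> S" "fst p \<in> S" for a p
    using that pow quandle_on_qop_pow_in[OF Q] by (auto simp: act_def split: prod.split)
  have fold: "foldl act a zs \<in> S \<and> R a (foldl act a zs)"
    if "a \<in> S" "fst ` set zs \<subseteq> S" for a zs
    using that
  proof (induction zs arbitrary: a)
    case Nil
    then show ?case
      by (simp add: refl)
  next
    case (Cons p zs)
    have "act a p \<in> S" "R a (act a p)"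
      using act Cons.prems by auto
    moreover from this(1) have "foldl act (act a p) zs \<in> S \<and> R (act a p) (foldl act (act a p) zs)"
      using Cons.IH Cons.prems(2) by simp
    ultimately show ?case
      using trans[of a "act a p"] by simp
  qed
  obtain ys es where "set ys \<subseteq> S" and x: "x = foldl act y (zip ys es)"
    using assms(2,6,7) unfolding indecomposable_def act_def by blast
  then have "fst ` set (zip ys es) \<subseteq> S"
    by (auto dest: set_zip_leftD)
  then have "R y x"
    using fold[OF \<open>y \<in> S\<close>] x by simp
  then show ?thesis
    by (rule sym)
qed

lemma bd1_hom:
  assumes "\<And>x y. x \<in> topspace X \<Longrightarrow> y \<in> topspace X \<Longrightarrow> qop x y \<in> topspace X"
  shows "bd1 qop \<in> hom (C1 X) (C0 X)"
proof (rule homI)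
  fix c assume "c \<in> carrier (C1 X)"
  then have paths: "pathin X g" if "g \<in> Poly_Mapping.keys c" for g
    using that by (auto simp: C1_def)
  have "Poly_Mapping.keys (bd1 qop c)
      \<subseteq> (\<Union>g \<in> Poly_Mapping.keys c. Poly_Mapping.keys (frag_of (g 0) - frag_of (qop (g 0) (g 1))))"
    unfolding bd1_def by (rule keys_frag_extend)
  also have "\<dots> \<subseteq> topspace X"
  proof (rule UN_least)
    fix g assume "g \<in> Poly_Mapping.keys c"
    then have "g 0 \<in> topspace X" "qop (g 0) (g 1) \<in> topspace X"
      using paths path_start_in_topspace path_finish_in_topspace assms by blast+
    then show "Poly_Mapping.keys (frag_of (g 0) - frag_of (qop (g 0) (g 1))) \<subseteq> topspace X"
      using keys_diff[of "frag_of (g 0)" "frag_of (qop (g 0) (g 1))"] by auto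
  qed
  finally show "bd1 qop c \<in> carrier (C0 X)"
    by (simp add: C0_def)
qed (simp add: bd1_def C0_def C1_def frag_extend_add)

lemma augmentation_bd1 [simp]: "augmentation (bd1 qop c) = 0"
  unfolding bd1_def using subset_UNIV
  by (induction c rule: frag_induction) (simp_all add: frag_extend_diff)

lemma subgroup_boundaries:
  assumes "\<And>x y. x \<in> topspace X \<Longrightarrow> y \<in> topspace X \<Longrightarrow> qop x y \<in> topspace X"
  shows "subgroup (bd1 qop ` carrier (C1 X)) (C0 X)"
proof (rule group_hom.img_is_subgroup)
  show "group_hom (C1 X) (C0 X) (bd1 qop)"
    using bd1_hom[OF assms] by (simp add: group_hom_def group_hom_axioms_def C0_def C1_def)
qed

lemma frag_of_diff_qop_in_boundaries:
  assumes "path_connected_space X" "x \<in> topspace X" "y \<in> topspace X"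
  shows "frag_of x - frag_of (qop x y) \<in> bd1 qop ` carrier (C1 X)"
proof -
  obtain g where "pathin X g" "g 0 = x" "g 1 = y"
    using assms unfolding path_connected_space_def by blast
  then have "frag_of g \<in> carrier (C1 X)" "bd1 qop (frag_of g) = frag_of x - frag_of (qop x y)"
    by (simp_all add: C1_def bd1_def)
  then show ?thesis
    by (metis image_eqI)
qed

lemma frag_of_diff_in_boundaries:
  assumes Q: "quandle_on (topspace X) qop" and "path_connected_space X"
    and "indecomposable (topspace X) qop" and "x \<in> topspace X" "y \<in> topspace X"
  shows "frag_of x - frag_of y \<in> bd1 qop ` carrier (C1 X)"
proof (rule indecomposable_quandle_related[OF Q assms(3) _ _ _ assms(4,5)])
  have B: "subgroup (bd1 qop ` carrier (C1 X)) (free_Abelian_group (topspace X))"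
    using subgroup_boundaries[of X qop] Q by (simp add: quandle_on_def C0_def)
  show "frag_of y - frag_of x \<in> bd1 qop ` carrier (C1 X)"
    if "frag_of x - frag_of y \<in> bd1 qop ` carrier (C1 X)" for x y
    using subgroup_free_Abelian_group_uminus_closed[OF B that] by simp
  show "frag_of x - frag_of z \<in> bd1 qop ` carrier (C1 X)"
    if "frag_of x - frag_of y \<in> bd1 qop ` carrier (C1 X)"
      "frag_of y - frag_of z \<in> bd1 qop ` carrier (C1 X)" for x y z
    using subgroup.m_closed[OF B that] by simp
qed (use frag_of_diff_qop_in_boundaries[OF assms(2)] in blast)

theorem mainTheorem5:
  fixes X :: "'a topology" and qop :: "'a \<Rightarrow> 'a \<Rightarrow> 'a"
  assumes "topspace X \<noteq> {}"
    and "topological_quandle X qop"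
    and "path_connected_space X"
    and "indecomposable (topspace X) qop"
  shows "H0 X qop \<cong> integer_group"
proof -
  have Q: "quandle_on (topspace X) qop"
    using assms(2) by (simp add: topological_quandle_def)
  then have B: "subgroup (bd1 qop ` carrier (C1 X)) (free_Abelian_group (topspace X))"
    using subgroup_boundaries[of X qop] by (simp add: quandle_on_def C0_def)
  obtain x\<^sub>0 where x\<^sub>0: "x\<^sub>0 \<in> topspace X"
    using assms(1) by blast
  have "kernel (free_Abelian_group (topspace X)) integer_group augmentation
      = bd1 qop ` carrier (C1 X)"
    using B x\<^sub>0 frag_of_diff_in_boundaries[OF Q assms(3,4) _ x\<^sub>0]
    by (intro kernel_augmentation_eq) auto
  then show ?thesis
    using free_Abelian_group_Mod_kernel_augmentation[OF assms(1)] by (simp add: H0_def C0_def)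
qed

end
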